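(* Let $N=(G=(V,E),\sigma,u,s)$ be a skew-symmetric network with $m=|E|$, and let $f$ be an IS-flow in $N$. Then $f$ has a symmetric decomposition consisting of at most $m$ elementary flows.
   Context: A skew-symmetric graph is a finite directed graph $G=(V,E)$ (parallel arcs allowed) with a map $\sigma$ of $V\cup E$ onto itself such that $\sigma(x)\ne x$, $\sigma(\sigma(x))=x$ for all $x$, $\sigma(V)=V$, and for each arc $a$ from $v$ to $w$, $\sigma(a)$ is an arc from $\sigma(w)$ to $\sigma(v)$; write $x'=\sigma(x)$. The map $\sigma$ extends to paths: $\sigma(P)$ consists of the mates of the elements of $P$ in reverse order. A function $h$ on $E$ is symmetric if $h(a)=h(\sigma(a))$ for all $a$. A skew-symmetric network is $N=(G,\sigma,u,s)$ with $u:E\to\mathbb Z_{\ge0}$ symmetric and a source $s\in V$; $s'=\sigma(s)$ is the sink. A flow is $f:E\to\mathbb R_{\ge 0}$ with $f(a)\le u(a)$ for all $a$ and $\mathrm{div}_f(x):=\sum_{a\text{ leaving }x}f(a)-\sum_{a\text{ entering }x}f(a)=0$ for all $x\in V\setminus\{s,s'\}$; its value is $|f|=\mathrm{div}_f(s)$. An IS-flow is an integer-valued symmetric flow. For a path or cycle $P$, $\chi^P\in\mathbb R^E$ is the incidence vector of its arc set. An elementary flow is an IS-flow in $N$ of the form $g=\delta\chi^P+\delta\chi^{P'}$, where $P$ is a simple cycle, or a simple path from $s$ to $s'$, or a simple path from $s'$ to $s$, $P'=\sigma(P)$, and $\delta$ is a positive integer. A symmetric decomposition of $f$ is a set $D$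 of elementary flows with $f=\sum_{g\in D}g$. *)

theory Defs
  imports Complex_Main
begin

text \<open>A finite directed multigraph: vertex set V, arc set E, each arc a has tail (tail a) and head (head a).
 The skew-symmetry sigma is given by an involution sv on vertices and se on arcs.\<close>

definition skew_graph ::
  "'v set \<Rightarrow> 'e set \<Rightarrow> ('e \<Rightarrow> 'v) \<Rightarrow> ('e \<Rightarrow> 'v) \<Rightarrow> ('v \<Rightarrow> 'v) \<Rightarrow> ('e \<Rightarrow> 'e) \<Rightarrow> bool" where
  "skew_graph V E tail head sv se \<longleftrightarrow>
     finite V \<and> finite E \<and>
     (\<forall>a\<in>E. tail a \<in> V \<and> head a \<in> V) \<and>
     (\<forall>x\<in>V. sv x \<in> V \<and> sv x \<noteq> x \<and> sv (sv x) = x) \<and>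
     (\<forall>a\<in>E. se a \<in> E \<and> se a \<noteq> a \<and> se (se a) = a \<and>
              tail (se a) = sv (head a) \<and> head (se a) = sv (tail a))"

definition skew_network ::
  "'v set \<Rightarrow> 'e set \<Rightarrow> ('e \<Rightarrow> 'v) \<Rightarrow> ('e \<Rightarrow> 'v) \<Rightarrow> ('v \<Rightarrow> 'v) \<Rightarrow> ('e \<Rightarrow> 'e)
    \<Rightarrow> ('e \<Rightarrow> nat) \<Rightarrow> 'v \<Rightarrow> bool" where
  "skew_network V E tail head sv se u s \<longleftrightarrow>
     skew_graph V E tail head sv se \<and> (\<forall>a\<in>E. u (se a) = u a) \<and> s \<in> V"

definition divg :: "'e set \<Rightarrow> ('e \<Rightarrow> 'v) \<Rightarrow> ('e \<Rightarrow> 'v) \<Rightarrow> ('e \<Rightarrow> real) \<Rightarrow> 'v \<Rightarrow> real" where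
  "divg E tail head f x = (\<Sum>a\<in>{a\<in>E. tail a = x}. f a) - (\<Sum>a\<in>{a\<in>E. head a = x}. f a)"

definition is_flow ::
  "'v set \<Rightarrow> 'e set \<Rightarrow> ('e \<Rightarrow> 'v) \<Rightarrow> ('e \<Rightarrow> 'v) \<Rightarrow> ('v \<Rightarrow> 'v)
    \<Rightarrow> ('e \<Rightarrow> nat) \<Rightarrow> 'v \<Rightarrow> ('e \<Rightarrow> real) \<Rightarrow> bool" where
  "is_flow V E tail head sv u s f \<longleftrightarrow>
     (\<forall>a\<in>E. 0 \<le> f a \<and> f a \<le> real (u a)) \<and>
     (\<forall>x\<in>V - {s, sv s}. divg E tail head f x = 0)"

definition is_IS_flow ::
  "'v set \<Rightarrow> 'e set \<Rightarrow> ('e \<Rightarrow> 'v) \<Rightarrow> ('e \<Rightarrow> 'v) \<Rightarrow> ('v \<Rightarrow> 'v) \<Rightarrow> ('e \<Rightarrow> 'e)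
    \<Rightarrow> ('e \<Rightarrow> nat) \<Rightarrow> 'v \<Rightarrow> ('e \<Rightarrow> real) \<Rightarrow> bool" where
  "is_IS_flow V E tail head sv se u s f \<longleftrightarrow>
     is_flow V E tail head sv u s f \<and> (\<forall>a\<in>E. f a \<in> \<int> \<and> f (se a) = f a)"

definition is_walk :: "'e set \<Rightarrow> ('e \<Rightarrow> 'v) \<Rightarrow> ('e \<Rightarrow> 'v) \<Rightarrow> 'e list \<Rightarrow> bool" where
  "is_walk E tail head p \<longleftrightarrow> p \<noteq> [] \<and> set p \<subseteq> E \<and>
     (\<forall>i. Suc i < length p \<longrightarrow> head (p ! i) = tail (p ! Suc i))"

definition simple_path :: "'e set \<Rightarrow> ('e \<Rightarrow> 'v) \<Rightarrow> ('e \<Rightarrow> 'v) \<Rightarrow> 'v \<Rightarrow> 'v \<Rightarrow> 'e list \<Rightarrow> bool" where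
  "simple_path E tail head x y p \<longleftrightarrow> is_walk E tail head p \<and>
     tail (List.hd p) = x \<and> head (last p) = y \<and> distinct (tail (List.hd p) # map head p)"

definition simple_cycle :: "'e set \<Rightarrow> ('e \<Rightarrow> 'v) \<Rightarrow> ('e \<Rightarrow> 'v) \<Rightarrow> 'e list \<Rightarrow> bool" where
  "simple_cycle E tail head p \<longleftrightarrow> is_walk E tail head p \<and>
     head (last p) = tail (List.hd p) \<and> distinct (map tail p)"

definition sigma_path :: "('e \<Rightarrow> 'e) \<Rightarrow> 'e list \<Rightarrow> 'e list" where
  "sigma_path se p = rev (map se p)"

definition chi :: "'e list \<Rightarrow> 'e \<Rightarrow> real" where
  "chi p a = (if a \<in> set p then 1 else 0)"

definition elementary_flow ::
  "'v set \<Rightarrow> 'e set \<Rightarrow> ('e \<Rightarrow> 'v) \<Rightarrow> ('e \<Rightarrow> 'v) \<Rightarrow> ('v \<Rightarrow> 'v) \<Rightarrow> ('e \<Rightarrow> 'e)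
    \<Rightarrow> ('e \<Rightarrow> nat) \<Rightarrow> 'v \<Rightarrow> ('e \<Rightarrow> real) \<Rightarrow> bool" where
  "elementary_flow V E tail head sv se u s g \<longleftrightarrow>
     is_IS_flow V E tail head sv se u s g \<and>
     (\<exists>P (\<delta>::nat). \<delta> > 0 \<and>
        (simple_cycle E tail head P \<or> simple_path E tail head s (sv s) P \<or> simple_path E tail head (sv s) s P) \<and>
        g = (\<lambda>a. real \<delta> * chi P a + real \<delta> * chi (sigma_path se P) a))"

definition symmetric_decomposition ::
  "'v set \<Rightarrow> 'e set \<Rightarrow> ('e \<Rightarrow> 'v) \<Rightarrow> ('e \<Rightarrow> 'v) \<Rightarrow> ('v \<Rightarrow> 'v) \<Rightarrow> ('e \<Rightarrow> 'e)
    \<Rightarrow> ('e \<Rightarrow> nat) \<Rightarrow> 'v \<Rightarrow> ('e \<Rightarrow> real) \<Rightarrow> ('e \<Rightarrow> real) set \<Rightarrow> bool" where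
  "symmetric_decomposition V E tail head sv se u s f D \<longleftrightarrow>
     finite D \<and> (\<forall>g\<in>D. elementary_flow V E tail head sv se u s g) \<and>
     (\<forall>a\<in>E. f a = (\<Sum>g\<in>D. g a))"

end

theory Submission
  imports Defs
begin

(* Regard the IS-flow as a natural-valued symmetric flow F. While F is nonzero, grow a walk of
   positive arcs that never uses an arc together with its mate unless that arc carries at least 2;
   by conservation and symmetry the walk can always be continued until it closes a simple cycle or
   joins s and s'. Subtracting the largest multiple delta (chi P + chi P') that keeps F nonnegative
   empties the bottleneck arc and its mate, or brings both below 2. Hence the potential
   sum_a min (F a) 2, which is at most 2m, drops by 2 for every elementary flow split off, and at
   most m elementary flows are used. *)

section \<open>Walks\<close>

fun walk_betw :: "'e set \<Rightarrow> ('e \<Rightarrow> 'v) \<Rightarrow> ('e \<Rightarrow> 'v) \<Rightarrow> 'v \<Rightarrow> 'e list \<Rightarrow> 'v \<Rightarrow> bool" where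
  "walk_betw E tail head x [] y \<longleftrightarrow> x = y"
| "walk_betw E tail head x (a # p) y \<longleftrightarrow> a \<in> E \<and> tail a = x \<and> walk_betw E tail head (head a) p y"

lemma walk_betw_vertices: "walk_betw E tail head x p y \<Longrightarrow> x # map head p = map tail p @ [y]"
  by (induction p arbitrary: x) auto

lemma walk_betw_append:
  "walk_betw E tail head x (p @ q) z \<longleftrightarrow> (\<exists>y. walk_betw E tail head x p y \<and> walk_betw E tail head y q z)"
  by (induction p arbitrary: x) auto

lemma walk_betw_snoc:
  "walk_betw E tail head x (p @ [a]) z \<longleftrightarrow> walk_betw E tail head x p (tail a) \<and> a \<in> E \<and> head a = z"
  by (auto simp: walk_betw_append)

lemma walk_betw_subset: "walk_betw E tail head x p y \<Longrightarrow> set p \<subseteq> E"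
  by (induction p arbitrary: x) auto

lemma walk_betw_last: "walk_betw E tail head x p y \<Longrightarrow> p \<noteq> [] \<Longrightarrow> head (last p) = y"
  by (induction p arbitrary: x rule: induct_list012) auto

lemma walk_betw_endpoints:
  "walk_betw E tail head x p y \<Longrightarrow> p \<noteq> [] \<Longrightarrow> tail (hd p) = x \<and> head (last p) = y"
  by (cases p) (auto dest: walk_betw_last)

lemma walk_betw_nth:
  "walk_betw E tail head x p y \<Longrightarrow> Suc j < length p \<Longrightarrow> head (p ! j) = tail (p ! Suc j)"
proof (induction p arbitrary: x j)
  case (Cons a p)
  then show ?case by (cases j; cases p) auto
qed simp

lemma walk_betw_split:
  assumes "walk_betw E tail head x p y" and "z \<in> set (x # map head p)"
  obtains p1 p2 where "p = p1 @ p2" "walk_betw E tail head x p1 z" "walk_betw E tail head z p2 y"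
  using assms
proof (induction p arbitrary: x thesis)
  case (Cons a p)
  show ?case
  proof (cases "z = x")
    case True
    then show ?thesis using Cons.prems by (intro Cons.prems(1)[of "[]" "a # p"]) auto
  next
    case False
    then obtain p1 p2 where "p = p1 @ p2" "walk_betw E tail head (head a) p1 z" "walk_betw E tail head z p2 y"
      using Cons.IH[of "head a"] Cons.prems(2,3) by auto
    then show ?thesis using Cons.prems by (intro Cons.prems(1)[of "a # p1" p2]) auto
  qed
qed simp

lemma is_walk_Cons_Cons:
  "is_walk E tail head (a # b # p) \<longleftrightarrow> a \<in> E \<and> head a = tail b \<and> is_walk E tail head (b # p)"
proof -
  have "(\<forall>i. Suc i < length (a # b # p) \<longrightarrow> head ((a # b # p) ! i) = tail ((a # b # p) ! Suc i)) \<longleftrightarrow>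
      head a = tail b \<and> (\<forall>i. Suc i < length (b # p) \<longrightarrow> head ((b # p) ! i) = tail ((b # p) ! Suc i))"
    by (auto simp: less_Suc_eq_0_disj all_conj_distrib)
  then show ?thesis unfolding is_walk_def by auto
qed

lemma is_walk_iff_walk_betw:
  "is_walk E tail head p \<longleftrightarrow> p \<noteq> [] \<and> walk_betw E tail head (tail (hd p)) p (head (last p))"
  by (induction p rule: induct_list012) (auto simp: is_walk_Cons_Cons, auto simp: is_walk_def)

lemma simple_path_iff:
  "simple_path E tail head x y p \<longleftrightarrow>
     p \<noteq> [] \<and> walk_betw E tail head x p y \<and> distinct (x # map head p)"
proof
  assume "simple_path E tail head x y p"
  then show "p \<noteq> [] \<and> walk_betw E tail head x p y \<and> distinct (x # map head p)"
    unfolding simple_path_def is_walk_iff_walk_betw by auto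
next
  assume p: "p \<noteq> [] \<and> walk_betw E tail head x p y \<and> distinct (x # map head p)"
  then have "tail (hd p) = x" "head (last p) = y"
    using walk_betw_endpoints[of E tail head x p y] by auto
  with p show "simple_path E tail head x y p"
    unfolding simple_path_def is_walk_iff_walk_betw by simp
qed

lemma simple_cycle_iff:
  "simple_cycle E tail head p \<longleftrightarrow>
     p \<noteq> [] \<and> walk_betw E tail head (tail (hd p)) p (tail (hd p)) \<and> distinct (map tail p)"
proof
  assume "simple_cycle E tail head p"
  then show "p \<noteq> [] \<and> walk_betw E tail head (tail (hd p)) p (tail (hd p)) \<and> distinct (map tail p)"
    unfolding simple_cycle_def is_walk_iff_walk_betw by auto
next
  assume p: "p \<noteq> [] \<and> walk_betw E tail head (tail (hd p)) p (tail (hd p)) \<and> distinct (map tail p)"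
  then have "head (last p) = tail (hd p)"
    using walk_betw_endpoints[of E tail head "tail (hd p)" p] by auto
  with p show "simple_cycle E tail head p"
    unfolding simple_cycle_def is_walk_iff_walk_betw by simp
qed

lemma walk_betw_inner_vertex:
  "walk_betw E tail head x p y \<Longrightarrow> z \<notin> {x, y} \<Longrightarrow> z \<in> tail ` set p \<longleftrightarrow> z \<in> head ` set p"
proof -
  assume "walk_betw E tail head x p y" "z \<notin> {x, y}"
  moreover from this(1) have "insert x (head ` set p) = insert y (tail ` set p)"
    using arg_cong[OF walk_betw_vertices, of E tail head x p y set] by simp
  ultimately show ?thesis by blast
qed

lemma walk_betw_close_cycle:
  assumes walk: "walk_betw E tail head x p y" and dist: "distinct (x # map head p)"
    and a: "a \<in> E" "tail a = y" "head a \<in> set (x # map head p)"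
  obtains C where "simple_cycle E tail head C" "set C \<subseteq> set (p @ [a])"
proof -
  obtain p1 p2 where p: "p = p1 @ p2" "walk_betw E tail head x p1 (head a)"
      "walk_betw E tail head (head a) p2 y"
    using walk_betw_split[OF walk a(3)] by blast
  define C where "C = p2 @ [a]"
  have walk_C: "walk_betw E tail head (head a) C (head a)"
    unfolding C_def using p(3) a by (simp add: walk_betw_snoc)
  have "x # map head p = map tail p1 @ head a # map head p2"
    using walk_betw_vertices[OF p(2)] p(1) by simp
  then have "distinct (head a # map head p2)"
    using dist by (metis distinct_append)
  moreover have "map tail C = head a # map head p2"
    unfolding C_def using walk_betw_vertices[OF p(3)] a(2) by simp
  ultimately have "simple_cycle E tail head C"
    using walk_C walk_betw_endpoints[OF walk_C] unfolding simple_cycle_iff C_def by simp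
  moreover have "set C \<subseteq> set (p @ [a])"
    unfolding C_def p(1) by auto
  ultimately show thesis by (rule that)
qed

section \<open>Divergence of incidence vectors\<close>

lemma divg_cong: "(\<And>a. a \<in> E \<Longrightarrow> h a = h' a) \<Longrightarrow> divg E tail head h x = divg E tail head h' x"
  unfolding divg_def by (intro arg_cong2[where f="(-)"] sum.cong) auto

lemma divg_add: "divg E tail head (\<lambda>a. h a + h' a) x = divg E tail head h x + divg E tail head h' x"
  unfolding divg_def by (simp add: sum.distrib)

lemma divg_diff: "divg E tail head (\<lambda>a. h a - h' a) x = divg E tail head h x - divg E tail head h' x"
  unfolding divg_def by (simp add: sum_subtractf)

lemma divg_scale: "divg E tail head (\<lambda>a. c * h a) x = c * divg E tail head h x"
  unfolding divg_def by (simp add: sum_distrib_left right_diff_distrib)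

lemma sum_chi_endpoint:
  assumes "finite E" "set P \<subseteq> E" "inj_on T (set P)"
  shows "(\<Sum>a\<in>{a\<in>E. T a = x}. chi P a) = (if x \<in> T ` set P then 1 else 0)"
proof -
  have "(\<Sum>a\<in>{a\<in>E. T a = x}. chi P a) = (\<Sum>a\<in>{a\<in>E. T a = x} \<inter> set P. 1)"
    unfolding chi_def using sum.inter_restrict[of "{a\<in>E. T a = x}" "\<lambda>_. 1::real" "set P"] assms(1)
    by simp
  also have "{a\<in>E. T a = x} \<inter> set P = {a\<in>set P. T a = x}"
    using assms(2) by auto
  moreover have "card {a\<in>set P. T a = x} = (if x \<in> T ` set P then 1 else 0)"
  proof (cases "x \<in> T ` set P")
    case True
    then obtain b where "b \<in> set P" "T b = x" by auto
    with assms(3) have "{a\<in>set P. T a = x} = {b}" by (auto simp: inj_on_def)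
    with True show ?thesis by simp
  qed auto
  ultimately show ?thesis by simp
qed

lemma divg_chi:
  assumes "finite E" "set P \<subseteq> E" "distinct (map tail P)" "distinct (map head P)"
  shows "divg E tail head (chi P) x =
           (if x \<in> tail ` set P then 1 else 0) - (if x \<in> head ` set P then 1 else 0)"
  using assms unfolding divg_def by (simp add: sum_chi_endpoint distinct_map)

lemma divg_chi_simple_path:
  assumes "finite E" "simple_path E tail head x y P" "z \<notin> {x, y}"
  shows "divg E tail head (chi P) z = 0"
proof -
  have P: "walk_betw E tail head x P y" "distinct (x # map head P)"
    using assms(2) by (auto simp: simple_path_iff)
  then have "distinct (map tail P)"
    using walk_betw_vertices[OF P(1)] by (metis distinct_append)
  then show ?thesis
    using P assms(1,3) walk_betw_inner_vertex[OF P(1) assms(3)]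
    by (simp add: divg_chi walk_betw_subset)
qed

lemma divg_chi_simple_cycle:
  assumes "finite E" "simple_cycle E tail head P"
  shows "divg E tail head (chi P) z = 0"
proof -
  obtain b rest where P: "P = b # rest" "walk_betw E tail head (tail b) P (tail b)"
      "distinct (map tail P)"
    using assms(2) by (cases P) (auto simp: simple_cycle_iff)
  have heads: "map head P = map tail rest @ [tail b]"
    using walk_betw_vertices[OF P(2)] P(1) by simp
  then have "distinct (map head P)"
    using P(1,3) by auto
  moreover have "head ` set P = tail ` set P"
    using arg_cong[OF heads, of set] P(1) by auto
  ultimately show ?thesis
    using P(2,3) assms(1) by (simp add: divg_chi walk_betw_subset)
qed

section \<open>Flow potential\<close>

definition capped_weight :: "'e set \<Rightarrow> ('e \<Rightarrow> nat) \<Rightarrow> nat" where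
  "capped_weight E F = (\<Sum>a\<in>E. min (F a) 2)"

lemma capped_weight_le: "finite E \<Longrightarrow> capped_weight E F \<le> 2 * card E"
  unfolding capped_weight_def using sum_bounded_above[of E "\<lambda>a. min (F a) 2" 2] by simp

lemma capped_weight_decrease:
  assumes "finite E" "\<And>a. a \<in> E \<Longrightarrow> F' a \<le> F a" "a \<in> E" "b \<in> E" "a \<noteq> b"
    and "min (F' a) 2 < min (F a) 2" "min (F' b) 2 < min (F b) 2"
  shows "capped_weight E F' + 2 \<le> capped_weight E F"
proof -
  have split: "capped_weight E G = min (G a) 2 + min (G b) 2 + (\<Sum>x\<in>E - {a, b}. min (G x) 2)" for G
    unfolding capped_weight_def using assms(1,3-5) sum.subset_diff[of "{a, b}" E "\<lambda>x. min (G x) 2"]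
    by simp
  have "(\<Sum>x\<in>E - {a, b}. min (F' x) 2) \<le> (\<Sum>x\<in>E - {a, b}. min (F x) 2)"
    using assms(2) by (intro sum_mono min.mono) auto
  then show ?thesis
    using split[of F] split[of F'] assms(6,7) by linarith
qed

lemma sum_pair_le:
  fixes F :: "'a \<Rightarrow> nat"
  assumes "finite A" "a \<in> A" "b \<in> A" "a \<noteq> b"
  shows "F a + F b \<le> sum F A"
  using sum_mono2[OF assms(1), of "{a, b}" F] assms by simp

lemma symmetric_decomposition_cong:
  "(\<And>a. a \<in> E \<Longrightarrow> f a = f' a) \<Longrightarrow>
     symmetric_decomposition V E tail head sv se u s f D \<longleftrightarrow> symmetric_decomposition V E tail head sv se u s f' D"
  unfolding symmetric_decomposition_def by auto

locale skew_symmetric_network =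
  fixes V :: "'v set" and E :: "'e set" and tail head :: "'e \<Rightarrow> 'v"
    and sv :: "'v \<Rightarrow> 'v" and se :: "'e \<Rightarrow> 'e" and u :: "'e \<Rightarrow> nat" and s :: 'v
  assumes network: "skew_network V E tail head sv se u s"
begin

lemma finite_V: "finite V" and finite_E: "finite E"
  and tail_in_V: "a \<in> E \<Longrightarrow> tail a \<in> V" and head_in_V: "a \<in> E \<Longrightarrow> head a \<in> V"
  and sv_neq: "x \<in> V \<Longrightarrow> sv x \<noteq> x"
  and sv_sv: "x \<in> V \<Longrightarrow> sv (sv x) = x"
  and se_in_E: "a \<in> E \<Longrightarrow> se a \<in> E" and se_neq: "a \<in> E \<Longrightarrow> se a \<noteq> a"
  and se_se: "a \<in> E \<Longrightarrow> se (se a) = a"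
  and tail_se: "a \<in> E \<Longrightarrow> tail (se a) = sv (head a)"
  and head_se: "a \<in> E \<Longrightarrow> head (se a) = sv (tail a)"
  and s_in_V: "s \<in> V"
  using network unfolding skew_network_def skew_graph_def by auto

lemma sv_in_terminals_iff:
  assumes "x \<in> V" shows "sv x \<in> {s, sv s} \<longleftrightarrow> x \<in> {s, sv s}"
proof -
  have "x = s" if "sv x = sv s"
    using arg_cong[OF that, of sv] by (simp add: sv_sv assms s_in_V)
  moreover have "x = sv s" if "sv x = s"
    using arg_cong[OF that, of sv] by (simp add: sv_sv assms)
  ultimately show ?thesis using sv_sv[OF s_in_V] by auto
qed

lemma sum_tail_se:
  assumes "x \<in> V"
  shows "(\<Sum>a\<in>{a\<in>E. tail a = x}. h (se a)) = (\<Sum>b\<in>{b\<in>E. head b = sv x}. h b)"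
  by (rule sum.reindex_bij_witness[where i=se and j=se])
    (use assms se_in_E se_se head_se tail_se sv_sv in auto)

lemma sum_head_se:
  assumes "x \<in> V"
  shows "(\<Sum>a\<in>{a\<in>E. head a = x}. h (se a)) = (\<Sum>b\<in>{b\<in>E. tail b = sv x}. h b)"
  by (rule sum.reindex_bij_witness[where i=se and j=se])
    (use assms se_in_E se_se head_se tail_se sv_sv in auto)

lemma divg_se: "x \<in> V \<Longrightarrow> divg E tail head (\<lambda>a. h (se a)) x = - divg E tail head h (sv x)"
  unfolding divg_def by (simp add: sum_tail_se sum_head_se)

lemma chi_sigma_path: "set P \<subseteq> E \<Longrightarrow> a \<in> E \<Longrightarrow> chi (sigma_path se P) a = chi P (se a)"
  unfolding chi_def sigma_path_def by (auto simp: se_se subset_iff intro!: image_eqI[of a se "se a"])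

lemma is_IS_flow_cong:
  "(\<And>a. a \<in> E \<Longrightarrow> f a = f' a) \<Longrightarrow> is_IS_flow V E tail head sv se u s f \<longleftrightarrow> is_IS_flow V E tail head sv se u s f'"
  unfolding is_IS_flow_def is_flow_def by (simp add: divg_cong[of E f f'] se_in_E cong: ball_cong)

lemma is_IS_flow_diff:
  assumes "is_IS_flow V E tail head sv se u s f" "is_IS_flow V E tail head sv se u s g"
    and "\<And>a. a \<in> E \<Longrightarrow> g a \<le> f a"
  shows "is_IS_flow V E tail head sv se u s (\<lambda>a. f a - g a)"
proof -
  have "f a - g a \<le> real (u a)" if "a \<in> E" for a
  proof -
    have "0 \<le> g a" "f a \<le> real (u a)"
      using assms(1,2) that unfolding is_IS_flow_def is_flow_def by auto
    then show ?thesis by linarith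
  qed
  with assms show ?thesis
    unfolding is_IS_flow_def is_flow_def by (auto simp: divg_diff)
qed

definition out_flow :: "('e \<Rightarrow> nat) \<Rightarrow> 'v \<Rightarrow> nat" where
  "out_flow F x = (\<Sum>a\<in>{a\<in>E. tail a = x}. F a)"

definition in_flow :: "('e \<Rightarrow> nat) \<Rightarrow> 'v \<Rightarrow> nat" where
  "in_flow F x = (\<Sum>a\<in>{a\<in>E. head a = x}. F a)"

lemma is_IS_flow_of_nat_iff:
  "is_IS_flow V E tail head sv se u s (\<lambda>a. real (F a)) \<longleftrightarrow>
     (\<forall>a\<in>E. F a \<le> u a \<and> F (se a) = F a) \<and> (\<forall>x\<in>V - {s, sv s}. out_flow F x = in_flow F x)"
proof -
  have "divg E tail head (\<lambda>a. real (F a)) x = real (out_flow F x) - real (in_flow F x)" for x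
    unfolding divg_def out_flow_def in_flow_def by simp
  then show ?thesis
    unfolding is_IS_flow_def is_flow_def by auto
qed

lemma is_IS_flow_nat_valued:
  assumes "is_IS_flow V E tail head sv se u s f" "a \<in> E"
  shows "f a = real (nat \<lfloor>f a\<rfloor>)"
proof -
  have "f a \<in> \<int>" "0 \<le> f a"
    using assms unfolding is_IS_flow_def is_flow_def by auto
  then show ?thesis by (auto elim: Ints_cases)
qed

lemma out_flow_sv:
  assumes "\<forall>a\<in>E. F (se a) = F a" "x \<in> V"
  shows "out_flow F (sv x) = in_flow F x"
proof -
  have "in_flow F x = (\<Sum>a\<in>{a\<in>E. head a = x}. F (se a))"
    unfolding in_flow_def using assms(1) by (intro sum.cong) auto
  then show ?thesis
    unfolding out_flow_def by (simp add: sum_head_se[OF assms(2), of F])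
qed

section \<open>Elementary flows\<close>

definition elementary_route :: "'e list \<Rightarrow> bool" where
  "elementary_route P \<longleftrightarrow> simple_cycle E tail head P \<or>
     simple_path E tail head s (sv s) P \<or> simple_path E tail head (sv s) s P"

definition route_flow :: "nat \<Rightarrow> 'e list \<Rightarrow> 'e \<Rightarrow> real" where
  "route_flow \<delta> P a = real \<delta> * chi P a + real \<delta> * chi (sigma_path se P) a"

definition route_mult :: "'e list \<Rightarrow> 'e \<Rightarrow> nat" where
  "route_mult P a = (if a \<in> set P then 1 else 0) + (if se a \<in> set P then 1 else 0)"

lemma elementary_route_arcs: "elementary_route P \<Longrightarrow> P \<noteq> [] \<and> set P \<subseteq> E"
  unfolding elementary_route_def simple_path_iff simple_cycle_iff by (auto dest: walk_betw_subset)

lemma divg_chi_elementary_route: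
  "elementary_route P \<Longrightarrow> x \<notin> {s, sv s} \<Longrightarrow> divg E tail head (chi P) x = 0"
  unfolding elementary_route_def
  using divg_chi_simple_cycle divg_chi_simple_path finite_E by fastforce

lemma route_flow_eq: "set P \<subseteq> E \<Longrightarrow> a \<in> E \<Longrightarrow> route_flow \<delta> P a = real (\<delta> * route_mult P a)"
  unfolding route_flow_def route_mult_def by (simp add: chi_sigma_path) (simp add: chi_def algebra_simps)

lemma route_mult_se: "a \<in> E \<Longrightarrow> route_mult P (se a) = route_mult P a"
  unfolding route_mult_def by (simp add: se_se)

lemma divg_route_flow:
  assumes P: "elementary_route P" and x: "x \<in> V - {s, sv s}"
  shows "divg E tail head (route_flow \<delta> P) x = 0"
proof -
  have "divg E tail head (route_flow \<delta> P) x =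
      divg E tail head (\<lambda>a. real \<delta> * chi P a + real \<delta> * chi P (se a)) x"
    using elementary_route_arcs[OF P] by (intro divg_cong) (simp add: route_flow_def chi_sigma_path)
  also have "\<dots> = real \<delta> * divg E tail head (chi P) x - real \<delta> * divg E tail head (chi P) (sv x)"
    using x by (simp add: divg_add divg_scale divg_se)
  also have "\<dots> = 0"
    using x sv_in_terminals_iff[of x] by (simp add: divg_chi_elementary_route[OF P])
  finally show ?thesis .
qed

lemma elementary_flow_iff:
  "elementary_flow V E tail head sv se u s g \<longleftrightarrow>
     (\<exists>P \<delta>. elementary_route P \<and> 0 < \<delta> \<and> g = route_flow \<delta> P \<and> (\<forall>a\<in>E. g a \<le> real (u a)))"
proof
  assume "elementary_flow V E tail head sv se u s g"
  then show "\<exists>P \<delta>. elementary_route P \<and> 0 < \<delta> \<and> g = route_flow \<delta> P \<and> (\<forall>a\<in>E. g a \<le> real (u a))"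
    unfolding elementary_flow_def is_IS_flow_def is_flow_def elementary_route_def route_flow_def
    by (auto intro!: ext)
next
  assume "\<exists>P \<delta>. elementary_route P \<and> 0 < \<delta> \<and> g = route_flow \<delta> P \<and> (\<forall>a\<in>E. g a \<le> real (u a))"
  then obtain P \<delta> where P: "elementary_route P" "0 < \<delta>" "g = route_flow \<delta> P"
    and le_u: "\<forall>a\<in>E. g a \<le> real (u a)"
    by blast
  have "is_IS_flow V E tail head sv se u s (route_flow \<delta> P)"
    unfolding is_IS_flow_def is_flow_def
    using le_u P elementary_route_arcs[OF P(1)] se_in_E
    by (auto simp: route_flow_eq route_mult_se divg_route_flow)
  with P show "elementary_flow V E tail head sv se u s g"
    unfolding elementary_flow_def elementary_route_def route_flow_def by blast
qed

lemma elementary_flow_scale: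
  assumes "elementary_flow V E tail head sv se u s g" "0 < k"
    and "\<And>a. a \<in> E \<Longrightarrow> real k * g a \<le> real (u a)"
  shows "elementary_flow V E tail head sv se u s (\<lambda>a. real k * g a)"
proof -
  obtain P \<delta> where "elementary_route P" "0 < \<delta>" "g = route_flow \<delta> P"
    using assms(1) elementary_flow_iff by blast
  moreover have "(\<lambda>a. real k * route_flow \<delta> P a) = route_flow (k * \<delta>) P"
    by (auto simp: route_flow_def algebra_simps)
  ultimately show ?thesis
    using assms(2,3) unfolding elementary_flow_iff by (metis nat_0_less_mult_iff)
qed

lemma symmetric_decomposition_add:
  assumes "symmetric_decomposition V E tail head sv se u s h D"
    and "elementary_flow V E tail head sv se u s g"
    and "\<And>a. a \<in> E \<Longrightarrow> g a + h a \<le> real (u a)"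
  obtains D' where "symmetric_decomposition V E tail head sv se u s (\<lambda>a. g a + h a) D'"
    and "card D' \<le> card D + 1"
  using assms
proof (induction "card D" arbitrary: D g h thesis rule: less_induct)
  case less
  note dec = less.prems(2) and g = less.prems(3) and le_u = less.prems(4)
  show ?case
  proof (cases "g \<in> D")
    case False
    then show ?thesis
      using dec g by (intro less.prems(1)[of "insert g D"]) (auto simp: symmetric_decomposition_def)
  next
    case True
    \<comment> \<open>A set cannot contain g twice: merge the two copies into the elementary flow 2g.\<close>
    have fin: "finite D" and els: "\<forall>k\<in>D. elementary_flow V E tail head sv se u s k"
      and h: "\<forall>a\<in>E. h a = (\<Sum>k\<in>D. k a)"
      using dec unfolding symmetric_decomposition_def by auto
    have h_split: "h a = g a + (\<Sum>k\<in>D - {g}. k a)" if "a \<in> E" for a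
      using h that fin True by (simp add: sum.remove)
    have "0 \<le> (\<Sum>k\<in>D - {g}. k a)" if "a \<in> E" for a
      using els that by (intro sum_nonneg) (auto simp: elementary_flow_def is_IS_flow_def is_flow_def)
    then have g2: "elementary_flow V E tail head sv se u s (\<lambda>a. real 2 * g a)"
      using le_u h_split by (intro elementary_flow_scale[OF g]) fastforce+
    have dec': "symmetric_decomposition V E tail head sv se u s (\<lambda>a. h a - g a) (D - {g})"
      using fin els h_split unfolding symmetric_decomposition_def by auto
    have smaller: "card (D - {g}) < card D"
      using fin True by (rule card_Diff1_less)
    obtain D' where D': "symmetric_decomposition V E tail head sv se u s (\<lambda>a. real 2 * g a + (h a - g a)) D'"
      and card_D': "card D' \<le> card (D - {g}) + 1"
    proof (rule less.hyps[OF smaller _ dec' g2])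
      show "real 2 * g a + (h a - g a) \<le> real (u a)" if "a \<in> E" for a
        using le_u[OF that] by simp
    qed
    have "(\<lambda>a. real 2 * g a + (h a - g a)) = (\<lambda>a. g a + h a)"
      by (simp add: algebra_simps)
    then show ?thesis
      using less.prems(1) D' card_D' smaller by simp
  qed
qed

section \<open>Regular routes\<close>

text \<open>A route may use an arc together with its mate only where the flow is at least 2, so that
  subtracting the elementary flow of the route with multiplier at least 1 keeps the flow nonnegative.\<close>

definition regular :: "('e \<Rightarrow> nat) \<Rightarrow> 'e list \<Rightarrow> bool" where
  "regular F p \<longleftrightarrow> (\<forall>a\<in>set p. se a \<in> set p \<longrightarrow> 2 \<le> F a)"

lemma regular_subset: "set q \<subseteq> set p \<Longrightarrow> regular F p \<Longrightarrow> regular F q"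
  unfolding regular_def by auto

lemma regular_snoc:
  assumes sym: "\<forall>a\<in>E. F (se a) = F a" and reg: "regular F p" and "set p \<subseteq> E" "a \<in> E"
    and a: "2 \<le> F a \<or> se a \<notin> set p"
  shows "regular F (p @ [a])"
  unfolding regular_def
proof (intro ballI impI)
  fix b assume b: "b \<in> set (p @ [a])" and b': "se b \<in> set (p @ [a])"
  consider "b = a" | "b \<in> set p" "se b = a" | "b \<in> set p" "se b \<in> set p"
    using b b' by auto
  then show "2 \<le> F b"
  proof cases
    case 1
    then show ?thesis using a b' se_neq[OF \<open>a \<in> E\<close>] by auto
  next
    case 2
    then have "se a = b" "F b = F a" using \<open>set p \<subseteq> E\<close> se_se sym by auto
    then show ?thesis using a 2 by auto
  next
    case 3
    then show ?thesis using reg unfolding regular_def by auto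
  qed
qed

lemma blocked_vertex_unit_flow:
  assumes bal: "\<forall>x\<in>V - {s, sv s}. out_flow F x = in_flow F x" and v: "v \<in> V - {s, sv s}"
    and inj: "inj_on head (set p)" and pos_in: "0 < in_flow F v"
    and blocked: "\<And>a. a \<in> E \<Longrightarrow> tail a = v \<Longrightarrow> 0 < F a \<Longrightarrow> F a = 1 \<and> se a \<in> set p"
  obtains a0 where "a0 \<in> E" "tail a0 = v" "0 < F a0" "in_flow F v = 1"
proof -
  have fin: "finite {a\<in>E. tail a = v}" using finite_E by auto
  have balanced_v: "out_flow F v = in_flow F v" using bal v by auto
  then have "out_flow F v \<noteq> 0" using pos_in by simp
  then obtain a0 where a0: "a0 \<in> E" "tail a0 = v" "0 < F a0"
    using fin unfolding out_flow_def by (auto simp: sum_eq_0_iff)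
  \<comment> \<open>the mates of positive arcs leaving v all enter sv v, and at most one arc of p does\<close>
  have unique: "a = a0" if a: "a \<in> E" "tail a = v" "0 < F a" for a
  proof -
    have "se a \<in> set p" "se a0 \<in> set p" using blocked a a0 by auto
    moreover have "head (se a) = head (se a0)" using head_se a a0 by simp
    ultimately have "se a = se a0" using inj by (auto dest: inj_onD)
    then have "se (se a) = se (se a0)" by simp
    then show ?thesis using se_se a(1) a0(1) by simp
  qed
  have "out_flow F v = (\<Sum>a\<in>{a0}. F a)"
    unfolding out_flow_def
  proof (rule sum.mono_neutral_right)
    show "\<forall>a\<in>{a\<in>E. tail a = v} - {a0}. F a = 0"
      using unique by fastforce
  qed (use fin a0 in auto)
  then have "in_flow F v = 1"
    using blocked[OF a0] balanced_v by simp
  with a0 show thesis by (rule that)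
qed

text \<open>If every positive arc leaving v were a unit arc whose mate is already on the walk, then,
  by the unit flow forced through v and its mate vertex, the last arc of the walk and its mate would
  both lie on the walk with unit flow, contradicting regularity.\<close>

lemma regular_extension:
  assumes sym: "\<forall>a\<in>E. F (se a) = F a" and bal: "\<forall>x\<in>V - {s, sv s}. out_flow F x = in_flow F x"
    and walk: "walk_betw E tail head w p v" and "p \<noteq> []" and dist: "distinct (w # map head p)"
    and pos: "\<forall>a\<in>set p. 0 < F a" and reg: "regular F p" and v: "v \<notin> {s, sv s}"
  obtains a where "a \<in> E" "tail a = v" "0 < F a" "2 \<le> F a \<or> se a \<notin> set p"
proof (rule ccontr)
  note extend = that
  assume no_extension: "\<not> thesis"
  have blocked: "F a = 1 \<and> se a \<in> set p" if a: "a \<in> E" "tail a = v" "0 < F a" for a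
  proof -
    have "\<not> (2 \<le> F a \<or> se a \<notin> set p)" using extend[OF a] no_extension by blast
    then show ?thesis using a(3) by auto
  qed
  have pE: "set p \<subseteq> E" using walk_betw_subset[OF walk] .
  define b where "b = last p"
  have b: "b \<in> set p" "b \<in> E" "head b = v" "0 < F b"
    using \<open>p \<noteq> []\<close> pE walk_betw_last[OF walk] pos unfolding b_def by auto
  have vV: "v \<in> V" using head_in_V b by auto
  have "F b \<le> in_flow F v"
    unfolding in_flow_def using b finite_E by (intro member_le_sum) auto
  have inj: "inj_on head (set p)" using dist by (simp add: distinct_map)
  obtain a0 where a0: "a0 \<in> E" "tail a0 = v" "0 < F a0" and in_v: "in_flow F v = 1"
  proof (rule blocked_vertex_unit_flow[OF bal _ inj])
    show "v \<in> V - {s, sv s}" using vV v by simp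
    show "0 < in_flow F v" using \<open>F b \<le> in_flow F v\<close> b(4) by simp
  qed (use blocked in auto)
  then have "F b = 1"
    using \<open>F b \<le> in_flow F v\<close> b(4) by simp
  obtain j where j: "j < length p" "p ! j = se a0"
    using blocked[OF a0] by (auto simp: in_set_conv_nth)
  have "head (p ! j) = sv v" using j head_se a0 by simp
  moreover have "p ! (length p - 1) = b"
    unfolding b_def using \<open>p \<noteq> []\<close> by (simp add: last_conv_nth)
  ultimately have "j \<noteq> length p - 1" using b(3) sv_neq[OF vV] by auto
  then have "Suc j < length p" using j(1) by simp
  define c where "c = p ! Suc j"
  have c: "c \<in> E" "tail c = sv v" "0 < F c"
    using walk_betw_nth[OF walk \<open>Suc j < length p\<close>] j pE pos nth_mem[OF \<open>Suc j < length p\<close>]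
      \<open>head (p ! j) = sv v\<close> unfolding c_def by auto
  have b': "se b \<in> E" "tail (se b) = sv v" "F (se b) = 1"
    using se_in_E tail_se b sym \<open>F b = 1\<close> by auto
  have "c = se b"
  proof (rule ccontr)
    assume "c \<noteq> se b"
    then have "F c + F (se b) \<le> out_flow F (sv v)"
      unfolding out_flow_def using c b' finite_E by (intro sum_pair_le) auto
    then show False using out_flow_sv[OF sym vV] in_v c(3) b'(3) by simp
  qed
  then have "se b \<in> set p" using nth_mem[OF \<open>Suc j < length p\<close>] unfolding c_def by simp
  then show False using reg b \<open>F b = 1\<close> unfolding regular_def by auto
qed

lemma elementary_route_of_terminal_walk:
  assumes walk: "walk_betw E tail head w p v" and "p \<noteq> []" and dist: "distinct (w # map head p)"
    and pos: "\<forall>a\<in>set p. 0 < F a" and v: "v \<in> {s, sv s}"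
    and terminal: "w \<in> {s, sv s} \<or> (\<forall>a\<in>E. 0 < F a \<longrightarrow> head a \<notin> {s, sv s})"
  shows "elementary_route p"
proof -
  have last: "last p \<in> set p" "head (last p) = v"
    using walk_betw_last[OF walk] \<open>p \<noteq> []\<close> by auto
  then have "last p \<in> E" "0 < F (last p)"
    using walk_betw_subset[OF walk] pos by auto
  then have "w \<in> {s, sv s}"
    using terminal last(2) v by blast
  moreover have "w \<noteq> v"
    using dist last by auto
  ultimately have "(w = s \<and> v = sv s) \<or> (w = sv s \<and> v = s)"
    using v sv_sv[OF s_in_V] by auto
  moreover have "simple_path E tail head w v p"
    using \<open>p \<noteq> []\<close> walk dist by (simp add: simple_path_iff)
  ultimately show ?thesis
    unfolding elementary_route_def by blast
qed

text \<open>Grow a simple walk of positive, regular arcs. It stops when it closes a cycle or reaches a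
  terminal; the invariant on its start w guarantees that it then runs between s and sv s.\<close>

lemma regular_route_search:
  assumes sym: "\<forall>a\<in>E. F (se a) = F a" and bal: "\<forall>x\<in>V - {s, sv s}. out_flow F x = in_flow F x"
  shows "walk_betw E tail head w p v \<Longrightarrow> distinct (w # map head p) \<Longrightarrow>
    \<forall>a\<in>set p. 0 < F a \<Longrightarrow> regular F p \<Longrightarrow> p \<noteq> [] \<or> (\<exists>a\<in>E. tail a = w \<and> 0 < F a) \<Longrightarrow>
    w \<in> {s, sv s} \<or> (\<forall>a\<in>E. 0 < F a \<longrightarrow> head a \<notin> {s, sv s}) \<Longrightarrow>
    \<exists>P. elementary_route P \<and> (\<forall>a\<in>set P. 0 < F a) \<and> regular F P"
proof (induction "card V - length p" arbitrary: p v rule: less_induct)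
  case less
  note walk = less.prems(1) and dist = less.prems(2) and pos = less.prems(3)
    and reg = less.prems(4) and start = less.prems(5) and terminal = less.prems(6)
  have pE: "set p \<subseteq> E" using walk_betw_subset[OF walk] .
  have wV: "w \<in> V"
    using start tail_in_V walk_betw_endpoints[OF walk] pE by (cases p) auto
  show ?case
  proof (cases "p \<noteq> [] \<and> v \<in> {s, sv s}")
    case True
    then show ?thesis
      using elementary_route_of_terminal_walk[OF walk _ dist pos _ terminal] pos reg by blast
  next
    case False
    obtain a where a: "a \<in> E" "tail a = v" "0 < F a" "2 \<le> F a \<or> se a \<notin> set p"
    proof (cases "p = []")
      case True
      then show ?thesis using that start walk by auto
    next
      case False
      then show ?thesis
        using regular_extension[OF sym bal walk False dist pos reg] that \<open>\<not> (p \<noteq> [] \<and> v \<in> {s, sv s})\<close>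
        by blast
    qed
    have reg': "regular F (p @ [a])" using regular_snoc[OF sym reg pE a(1,4)] .
    show ?thesis
    proof (cases "head a \<in> set (w # map head p)")
      case True
      then obtain C where C: "simple_cycle E tail head C" "set C \<subseteq> set (p @ [a])"
        using walk_betw_close_cycle[OF walk dist a(1,2)] by blast
      then show ?thesis
        using regular_subset[OF C(2) reg'] pos a(3) unfolding elementary_route_def by auto
    next
      case False
      have "length (w # map head p) \<le> card V"
        using card_mono[OF finite_V, of "set (w # map head p)"] distinct_card[OF dist] wV pE head_in_V
        by auto
      then have shorter: "card V - length (p @ [a]) < card V - length p" by simp
      have walk': "walk_betw E tail head w (p @ [a]) (head a)"
        using walk a by (simp add: walk_betw_snoc)
      show ?thesis
      proof (rule less.hyps[OF shorter walk'])
        show "distinct (w # map head (p @ [a]))" using dist False by auto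
        show "\<forall>b\<in>set (p @ [a]). 0 < F b" using pos a(3) by auto
      qed (use reg' terminal in auto)
    qed
  qed
qed

lemma regular_route_exists:
  assumes sym: "\<forall>a\<in>E. F (se a) = F a" and bal: "\<forall>x\<in>V - {s, sv s}. out_flow F x = in_flow F x"
    and nonzero: "\<exists>a\<in>E. 0 < F a"
  obtains P where "elementary_route P" "\<forall>a\<in>set P. 0 < F a" "regular F P"
proof -
  obtain a where a: "a \<in> E" "0 < F a"
    and start: "tail a \<in> {s, sv s} \<or> (\<forall>b\<in>E. 0 < F b \<longrightarrow> tail b \<notin> {s, sv s})"
    using nonzero by blast
  have "\<forall>b\<in>E. 0 < F b \<longrightarrow> head b \<notin> {s, sv s}" if "\<forall>b\<in>E. 0 < F b \<longrightarrow> tail b \<notin> {s, sv s}"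
  proof (intro ballI impI)
    fix b assume "b \<in> E" "0 < F b"
    then have "sv (head b) \<notin> {s, sv s}"
      using that se_in_E sym tail_se by (metis)
    then show "head b \<notin> {s, sv s}"
      using sv_in_terminals_iff head_in_V \<open>b \<in> E\<close> by blast
  qed
  then show ?thesis
    using regular_route_search[OF sym bal, of "tail a" "[]" "tail a"] start a that
    by (auto simp: regular_def)
qed

section \<open>Splitting off elementary flows\<close>

definition route_slack :: "('e \<Rightarrow> nat) \<Rightarrow> 'e list \<Rightarrow> 'e \<Rightarrow> nat" where
  "route_slack F P a = (if se a \<in> set P then F a div 2 else F a)"

lemma route_mult_le:
  assumes sym: "\<forall>a\<in>E. F (se a) = F a" and a: "a \<in> E"
    and \<delta>_le: "\<forall>b\<in>set P. \<delta> \<le> route_slack F P b"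
  shows "\<delta> * route_mult P a \<le> F a"
proof -
  consider "a \<in> set P" "se a \<in> set P" | "a \<in> set P" "se a \<notin> set P"
    | "a \<notin> set P" "se a \<in> set P" | "a \<notin> set P" "se a \<notin> set P"
    by blast
  then show ?thesis
  proof cases
    case 1
    then have "\<delta> \<le> F a div 2" using bspec[OF \<delta>_le, of a] unfolding route_slack_def by simp
    then show ?thesis using 1 unfolding route_mult_def by simp
  next
    case 2
    then show ?thesis using bspec[OF \<delta>_le, of a] unfolding route_slack_def route_mult_def by simp
  next
    case 3
    then have "\<delta> \<le> F (se a)"
      using bspec[OF \<delta>_le, of "se a"] se_se[OF a] unfolding route_slack_def by simp
    then show ?thesis using 3 sym a unfolding route_mult_def by auto
  next
    case 4
    then show ?thesis unfolding route_mult_def by simp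
  qed
qed

text \<open>The largest multiplier of the route: its bottleneck arc loses all its flow, or, if the route
  also uses the mate, is left with flow below 2.\<close>

lemma route_multiplier:
  assumes sym: "\<forall>a\<in>E. F (se a) = F a" and P: "elementary_route P"
    and pos: "\<forall>a\<in>set P. 0 < F a" and reg: "regular F P"
  obtains \<delta> a0 where "0 < \<delta>" "\<And>a. a \<in> E \<Longrightarrow> \<delta> * route_mult P a \<le> F a"
    and "a0 \<in> E" "min (F a0 - \<delta> * route_mult P a0) 2 < min (F a0) 2"
proof -
  have PE: "P \<noteq> []" "set P \<subseteq> E" using elementary_route_arcs[OF P] by auto
  define \<delta> where "\<delta> = Min (route_slack F P ` set P)"
  have \<delta>_le: "\<forall>b\<in>set P. \<delta> \<le> route_slack F P b"
    unfolding \<delta>_def by simp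
  have "\<delta> \<in> route_slack F P ` set P"
    unfolding \<delta>_def using PE(1) by (intro Min_in) auto
  then obtain a0 where a0: "a0 \<in> set P" "route_slack F P a0 = \<delta>"
    by (auto simp: eq_commute)
  have slack_pos: "0 < route_slack F P a" if "a \<in> set P" for a
    using pos reg that unfolding route_slack_def regular_def by auto
  have "min (F a0 - \<delta> * route_mult P a0) 2 < min (F a0) 2"
  proof (cases "se a0 \<in> set P")
    case True
    then have "2 \<le> F a0" using reg a0(1) unfolding regular_def by auto
    then show ?thesis using True a0 unfolding route_slack_def route_mult_def by auto
  next
    case False
    then show ?thesis using a0 pos unfolding route_slack_def route_mult_def by auto
  qed
  then show thesis
    using that[OF _ route_mult_le[OF sym _ \<delta>_le]] slack_pos[OF a0(1)] a0 PE(2) by auto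
qed

lemma reduce_along_route:
  assumes flow: "is_IS_flow V E tail head sv se u s (\<lambda>a. real (F a))"
    and P: "elementary_route P" and pos: "\<forall>a\<in>set P. 0 < F a" and reg: "regular F P"
  obtains g F' where "elementary_flow V E tail head sv se u s g"
    and "is_IS_flow V E tail head sv se u s (\<lambda>a. real (F' a))"
    and "\<And>a. a \<in> E \<Longrightarrow> real (F a) = g a + real (F' a)"
    and "capped_weight E F' + 2 \<le> capped_weight E F"
proof -
  have sym: "\<forall>a\<in>E. F (se a) = F a" and F_le_u: "\<forall>a\<in>E. F a \<le> u a"
    using flow by (auto simp: is_IS_flow_of_nat_iff)
  obtain \<delta> a0 where \<delta>: "0 < \<delta>" "\<And>a. a \<in> E \<Longrightarrow> \<delta> * route_mult P a \<le> F a"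
    and a0: "a0 \<in> E" "min (F a0 - \<delta> * route_mult P a0) 2 < min (F a0) 2"
    using route_multiplier[OF sym P pos reg] by blast
  define F' where "F' a = F a - \<delta> * route_mult P a" for a
  have PE: "set P \<subseteq> E" using elementary_route_arcs[OF P] by simp
  have "route_flow \<delta> P a \<le> real (u a)" if "a \<in> E" for a
  proof -
    have "\<delta> * route_mult P a \<le> u a" using \<delta>(2)[OF that] F_le_u that le_trans by blast
    then show ?thesis by (simp add: route_flow_eq[OF PE that] del: of_nat_mult)
  qed
  then have g: "elementary_flow V E tail head sv se u s (route_flow \<delta> P)"
    unfolding elementary_flow_iff using P \<delta>(1) by blast
  have split: "real (F a) = route_flow \<delta> P a + real (F' a)" if "a \<in> E" for a
    using \<delta>(2)[OF that] unfolding F'_def by (simp add: route_flow_eq[OF PE that] of_nat_diff)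
  have "is_IS_flow V E tail head sv se u s (route_flow \<delta> P)"
    using g unfolding elementary_flow_def by blast
  then have "is_IS_flow V E tail head sv se u s (\<lambda>a. real (F a) - route_flow \<delta> P a)"
    using flow \<delta>(2) by (intro is_IS_flow_diff) (simp_all add: route_flow_eq[OF PE] del: of_nat_mult)
  then have flow': "is_IS_flow V E tail head sv se u s (\<lambda>a. real (F' a))"
    using split is_IS_flow_cong by (smt (verit))
  have "F' (se a0) = F' a0" "F (se a0) = F a0"
    using sym a0(1) route_mult_se[OF a0(1)] unfolding F'_def by auto
  then have "min (F' a) 2 < min (F a) 2" if "a \<in> {a0, se a0}" for a
    using a0(2) that unfolding F'_def by auto
  then have "capped_weight E F' + 2 \<le> capped_weight E F"
    using a0(1) se_in_E not_sym[OF se_neq[OF a0(1)]] unfolding F'_def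
    by (intro capped_weight_decrease[OF finite_E, of _ _ a0 "se a0"]) auto
  with g flow' split show thesis by (rule that)
qed

lemma IS_flow_of_nat_decomposition:
  "is_IS_flow V E tail head sv se u s (\<lambda>a. real (F a)) \<Longrightarrow>
     \<exists>D. symmetric_decomposition V E tail head sv se u s (\<lambda>a. real (F a)) D \<and>
       2 * card D \<le> capped_weight E F"
proof (induction "capped_weight E F" arbitrary: F rule: less_induct)
  case less
  show ?case
  proof (cases "\<exists>a\<in>E. 0 < F a")
    case False
    then have "symmetric_decomposition V E tail head sv se u s (\<lambda>a. real (F a)) {}"
      unfolding symmetric_decomposition_def by simp
    then show ?thesis by (intro exI[of _ "{}"]) simp
  next
    case True
    have sym: "\<forall>a\<in>E. F (se a) = F a" and bal: "\<forall>x\<in>V - {s, sv s}. out_flow F x = in_flow F x"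
      and F_le_u: "\<forall>a\<in>E. F a \<le> u a"
      using less.prems by (auto simp: is_IS_flow_of_nat_iff)
    obtain P where "elementary_route P" "\<forall>a\<in>set P. 0 < F a" "regular F P"
      using regular_route_exists[OF sym bal True] by blast
    then obtain g F' where g: "elementary_flow V E tail head sv se u s g"
      and flow': "is_IS_flow V E tail head sv se u s (\<lambda>a. real (F' a))"
      and split: "\<And>a. a \<in> E \<Longrightarrow> real (F a) = g a + real (F' a)"
      and smaller: "capped_weight E F' + 2 \<le> capped_weight E F"
      using reduce_along_route[OF less.prems] by blast
    obtain D' where D': "symmetric_decomposition V E tail head sv se u s (\<lambda>a. real (F' a)) D'"
      and card_D': "2 * card D' \<le> capped_weight E F'"
      using less.hyps[OF _ flow'] smaller by auto
    obtain D where D: "symmetric_decomposition V E tail head sv se u s (\<lambda>a. g a + real (F' a)) D"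
      and card_D: "card D \<le> card D' + 1"
    proof (rule symmetric_decomposition_add[OF D' g])
      show "g a + real (F' a) \<le> real (u a)" if "a \<in> E" for a
      proof -
        have "real (F a) \<le> real (u a)" using F_le_u that by simp
        with split[OF that] show ?thesis by linarith
      qed
    qed
    have "symmetric_decomposition V E tail head sv se u s (\<lambda>a. real (F a)) D"
      using D by (subst symmetric_decomposition_cong[OF split])
    moreover have "2 * card D \<le> capped_weight E F"
      using card_D card_D' smaller by linarith
    ultimately show ?thesis by blast
  qed
qed

end

theorem mainTheorem2:
  fixes V :: "'v set" and E :: "'e set" and tail head :: "'e \<Rightarrow> 'v"
    and sv :: "'v \<Rightarrow> 'v" and se :: "'e \<Rightarrow> 'e" and u :: "'e \<Rightarrow> nat" and s :: 'v
    and f :: "'e \<Rightarrow> real"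
  assumes "skew_network V E tail head sv se u s"
    and "is_IS_flow V E tail head sv se u s f"
  shows "\<exists>D. symmetric_decomposition V E tail head sv se u s f D \<and> card D \<le> card E"
proof -
  interpret skew_symmetric_network V E tail head sv se u s
    by (rule skew_symmetric_network.intro) (fact assms(1))
  define F where "F a = nat \<lfloor>f a\<rfloor>" for a
  have f_eq: "f a = real (F a)" if "a \<in> E" for a
    unfolding F_def using is_IS_flow_nat_valued[OF assms(2) that] .
  have "is_IS_flow V E tail head sv se u s (\<lambda>a. real (F a))"
    using assms(2) is_IS_flow_cong[OF f_eq] by simp
  then obtain D where D: "symmetric_decomposition V E tail head sv se u s (\<lambda>a. real (F a)) D"
    and card_D: "2 * card D \<le> capped_weight E F"
    using IS_flow_of_nat_decomposition by blast
  have "symmetric_decomposition V E tail head sv se u s f D"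
    using D by (subst symmetric_decomposition_cong[OF f_eq])
  moreover have "card D \<le> card E"
    using card_D capped_weight_le[OF finite_E, of F] by simp
  ultimately show ?thesis by blast
qed

end
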